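(* Let $\mathbb{F}$ be a field, $m,b\in\mathbb{F}$ with $m\ne0$, $m\neq1$, let $\mathfrak{A}$ be the unital associative $\mathbb{F}$-algebra generated by $A,B$ subject to $AB=mBA+bI$, and let $C=AB-BA$. For every positive integer $n$, $$(m-1)^nA^nB^n=\prod_{i=1}^n(m^iC-bI),\qquad (m-1)^nB^nA^n=\prod_{i=0}^{n-1}(m^{-i}C-bI).$$
   Context: $I$ is the unity of $\mathfrak{A}$; the factors in each product commute since they are polynomials in $C$. *)

theory Defs
  imports Main "HOL.Vector_Spaces"
begin

definition is_algebra :: "('a::field \<Rightarrow> 'b::ring_1 \<Rightarrow> 'b) \<Rightarrow> bool" where
  "is_algebra s \<longleftrightarrow> module s \<and>
     (\<forall>c x y. s c (x * y) = s c x * y \<and> s c (x * y) = x * s c y)"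

end

theory Submission
  imports Defs
begin

text \<open>Commuting $C$ past $A$ (resp. $B$) multiplies it by $m$ (resp. $m^{-1}$), so
  $A^k(mC - bI) = (m^{k+1}C - bI)A^k$ and $B^k(C - bI) = (m^{-k}C - bI)B^k$. Since
  $(m-1)AB = mC - bI$ and $(m-1)BA = C - bI$, peeling one factor $AB$ (resp. $BA$)
  off the middle of $A^{k+1}B^{k+1}$ (resp. $B^{k+1}A^{k+1}$) and moving it to the
  left yields the next factor of the product; all factors are polynomials in $C$,
  hence commute.\<close>

lemma commute_prod_list:
  fixes c :: "'b::monoid_mult"
  assumes "\<And>i. c * f i = f i * c"
  shows "c * prod_list (map f xs) = prod_list (map f xs) * c"
  using assms by (induction xs) (simp_all add: mult.assoc[symmetric], metis mult.assoc)

locale unital_algebra =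
  fixes s :: "'a::field \<Rightarrow> 'b::ring_1 \<Rightarrow> 'b"
  assumes is_algebra: "is_algebra s"
begin

sublocale module s
  using is_algebra unfolding is_algebra_def by blast

lemma scale_mult_left: "s c (x * y) = s c x * y"
  using is_algebra unfolding is_algebra_def by blast

lemma scale_mult_right: "s c (x * y) = x * s c y"
  using is_algebra unfolding is_algebra_def by blast

lemma scale_one_commute: "x * s c 1 = s c 1 * x"
  by (metis scale_mult_left scale_mult_right mult_1_left mult_1_right)

end

locale skew_commuting_pair = unital_algebra s
  for s :: "'a::field \<Rightarrow> 'b::ring_1 \<Rightarrow> 'b" +
  fixes m b :: 'a and A B :: 'b
  assumes skew_rel: "A * B = s m (B * A) + s b 1"
begin

definition commutator :: 'b where "commutator = A * B - B * A"

lemma left_mult_commutator: "A * commutator = s m (commutator * A)"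
proof -
  have "A * commutator = A * (A * B) - (A * B) * A"
    by (simp add: commutator_def algebra_simps)
  also have "\<dots> = s m (A * B * A) - s m (B * A * A)"
    by (simp add: skew_rel algebra_simps scale_right_distrib scale_left_distrib
        flip: scale_mult_left scale_mult_right mult.assoc)
  also have "\<dots> = s m (commutator * A)"
    by (simp add: commutator_def algebra_simps scale_right_diff_distrib)
  finally show ?thesis .
qed

lemma commutator_mult_right: "commutator * B = s m (B * commutator)"
proof -
  have "commutator * B = (A * B) * B - B * (A * B)"
    by (simp add: commutator_def algebra_simps)
  also have "\<dots> = s m (B * A * B) - s m (B * B * A)"
    by (simp add: skew_rel algebra_simps scale_right_distrib scale_left_distrib
        flip: scale_mult_left scale_mult_right mult.assoc)
  also have "\<dots> = s m (B * commutator)"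
    by (simp add: commutator_def algebra_simps scale_right_diff_distrib)
  finally show ?thesis .
qed

lemma power_left_mult_commutator: "A ^ k * commutator = s (m ^ k) (commutator * A ^ k)"
proof (induction k)
  case (Suc k)
  have "A ^ Suc k * commutator = A * (A ^ k * commutator)"
    by (simp add: mult.assoc)
  also have "\<dots> = s (m ^ k) (A * commutator * A ^ k)"
    by (simp add: Suc flip: scale_mult_right mult.assoc)
  also have "\<dots> = s (m ^ Suc k) (commutator * A ^ Suc k)"
    by (simp add: left_mult_commutator mult.assoc mult.commute flip: scale_mult_left)
  finally show ?case .
qed simp

lemma power_right_mult_commutator:
  assumes "m \<noteq> 0"
  shows "B ^ k * commutator = s (inverse m ^ k) (commutator * B ^ k)"
proof (induction k)
  case (Suc k)
  have B_commutator: "B * commutator = s (inverse m) (commutator * B)"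
    using commutator_mult_right assms by simp
  have "B ^ Suc k * commutator = B * (B ^ k * commutator)"
    by (simp add: mult.assoc)
  also have "\<dots> = s (inverse m ^ k) (B * commutator * B ^ k)"
    by (simp add: Suc flip: scale_mult_right mult.assoc)
  also have "\<dots> = s (inverse m ^ Suc k) (commutator * B ^ Suc k)"
    by (simp add: B_commutator mult.assoc mult.commute flip: scale_mult_left)
  finally show ?case .
qed simp

lemma scale_AB: "s (m - 1) (A * B) = s m commutator - s b 1"
  by (simp add: commutator_def skew_rel scale_left_diff_distrib scale_right_diff_distrib
      scale_right_distrib left_diff_distrib)

lemma scale_BA: "s (m - 1) (B * A) = commutator - s b 1"
  by (simp add: commutator_def skew_rel scale_left_diff_distrib)

lemma commutator_commute_prod:
  "commutator * prod_list (map (\<lambda>i. s (f i) commutator - s b 1) xs)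
     = prod_list (map (\<lambda>i. s (f i) commutator - s b 1) xs) * commutator"
  by (rule commute_prod_list)
    (simp add: algebra_simps scale_one_commute flip: scale_mult_left scale_mult_right)

lemma factor_commute_prod:
  "(s c commutator - s b 1) * prod_list (map (\<lambda>i. s (f i) commutator - s b 1) xs)
     = prod_list (map (\<lambda>i. s (f i) commutator - s b 1) xs) * (s c commutator - s b 1)"
  using commutator_commute_prod[of f xs]
  by (simp add: algebra_simps scale_one_commute flip: scale_mult_left scale_mult_right)

lemma scaled_power_AB:
  "s ((m - 1) ^ k) (A ^ k * B ^ k)
     = prod_list (map (\<lambda>i. s (m ^ i) commutator - s b 1) [1..<k+1])"
proof (induction k)
  case (Suc k)
  let ?P = "prod_list (map (\<lambda>i. s (m ^ i) commutator - s b 1) [1..<k+1])"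
  have peel: "A ^ Suc k * B ^ Suc k = A ^ k * (A * B) * B ^ k"
    by (simp only: power_Suc2[of A] power_Suc[of B] mult.assoc)
  have shift: "A ^ k * (s m commutator - s b 1) = (s (m ^ Suc k) commutator - s b 1) * A ^ k"
    by (simp add: algebra_simps power_left_mult_commutator scale_one_commute
        flip: scale_mult_left scale_mult_right)
  have "s ((m - 1) ^ Suc k) (A ^ Suc k * B ^ Suc k)
      = s ((m - 1) ^ k) (A ^ k * s (m - 1) (A * B) * B ^ k)"
    unfolding peel by (simp add: mult.commute flip: scale_mult_left scale_mult_right)
  also have "\<dots> = s ((m - 1) ^ k) ((s (m ^ Suc k) commutator - s b 1) * (A ^ k * B ^ k))"
    by (simp only: scale_AB shift mult.assoc)
  also have "\<dots> = (s (m ^ Suc k) commutator - s b 1) * ?P"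
    by (metis scale_mult_right Suc.IH)
  also have "\<dots> = ?P * (s (m ^ Suc k) commutator - s b 1)"
    by (rule factor_commute_prod)
  finally show ?case by simp
qed simp

lemma scaled_power_BA:
  assumes "m \<noteq> 0"
  shows "s ((m - 1) ^ k) (B ^ k * A ^ k)
     = prod_list (map (\<lambda>i. s (inverse (m ^ i)) commutator - s b 1) [0..<k])"
proof (induction k)
  case (Suc k)
  let ?P = "prod_list (map (\<lambda>i. s (inverse (m ^ i)) commutator - s b 1) [0..<k])"
  have peel: "B ^ Suc k * A ^ Suc k = B ^ k * (B * A) * A ^ k"
    by (simp only: power_Suc2[of B] power_Suc[of A] mult.assoc)
  have shift: "B ^ k * (commutator - s b 1) = (s (inverse (m ^ k)) commutator - s b 1) * B ^ k"
    by (simp add: algebra_simps power_right_mult_commutator[OF assms] scale_one_commute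
        power_inverse flip: scale_mult_left scale_mult_right)
  have "s ((m - 1) ^ Suc k) (B ^ Suc k * A ^ Suc k)
      = s ((m - 1) ^ k) (B ^ k * s (m - 1) (B * A) * A ^ k)"
    unfolding peel by (simp add: mult.commute flip: scale_mult_left scale_mult_right)
  also have "\<dots> = s ((m - 1) ^ k) ((s (inverse (m ^ k)) commutator - s b 1) * (B ^ k * A ^ k))"
    by (simp only: scale_BA shift mult.assoc)
  also have "\<dots> = (s (inverse (m ^ k)) commutator - s b 1) * ?P"
    by (metis scale_mult_right Suc.IH)
  also have "\<dots> = ?P * (s (inverse (m ^ k)) commutator - s b 1)"
    by (rule factor_commute_prod)
  finally show ?case by simp
qed simp

end

theorem mainTheorem7:
  fixes s :: "'a::field \<Rightarrow> 'b::ring_1 \<Rightarrow> 'b"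
    and m b :: 'a and A B :: 'b and n :: nat
  assumes alg: "is_algebra s"
    and m0: "m \<noteq> 0" and m1: "m \<noteq> 1"
    and rel: "A * B = s m (B * A) + s b 1"
    and n: "n \<ge> 1"
  shows "s ((m - 1) ^ n) (A ^ n * B ^ n) =
           prod_list (map (\<lambda>i. s (m ^ i) (A * B - B * A) - s b 1) [1..<n+1])
     \<and> s ((m - 1) ^ n) (B ^ n * A ^ n) =
           prod_list (map (\<lambda>i. s (inverse (m ^ i)) (A * B - B * A) - s b 1) [0..<n])"
proof -
  interpret skew_commuting_pair s m b A B
    by (simp add: skew_commuting_pair_def unital_algebra_def
        skew_commuting_pair_axioms_def alg rel)
  show ?thesis
    using scaled_power_AB scaled_power_BA[OF m0] unfolding commutator_def by blast
qed

end
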